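(* Let $\mathfrak g$ be a finite-dimensional simple complex Lie algebra with root lattice $Q$ and weight lattice $\Lambda$. Then: (a) if $\mathfrak g$ is of type $A_{2k}$ ($k\ge1$) or $E_6$, then $Q\cap2\Lambda=2Q$ and $2Q\ne2\Lambda$; (b) if $\mathfrak g$ is of type $A_1$, $B_n$, $C_n$, $D_{2k+2}$ or $E_7$, then $Q\cap2\Lambda=2\Lambda$ and $2\Lambda\ne2Q$; (c) if $\mathfrak g$ is of type $E_8$, $F_4$ or $G_2$, then $Q\cap2\Lambda=2\Lambda=2Q$; (d) if $\mathfrak g$ is of type $A_{2k+1}$ or $D_{2k+3}$ with $k\ge1$, then $Q\cap2\Lambda=2Q+\mathbb Z\alpha^\diamond$ and $2Q+\mathbb Z\alpha^\diamond\ne2\Lambda$. Moreover, if $\mathfrak g$ is of type $D_n$ with $n$ odd, then $2Q+\mathbb Z\alpha^\diamond=4\mathbb Z\lambda_{n-1}+4\mathbb Z\lambda_n+\mathbb Z\alpha^\diamond+\sum_{i=1}^{n-2}2\mathbb Z\lambda_i$.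
   Context: Simple roots $\alpha_1,\dots,\alpha_n$ and fundamental weights $\lambda_1,\dots,\lambda_n$ are labelled by the Dynkin diagrams: $A_n$: chain $1-2-\cdots-n$; $D_n$: chain $1-2-\cdots-(n-2)$ with nodes $n-1$ and $n$ both attached to node $n-2$. $Q=\bigoplus_i\mathbb Z\alpha_i$, $\Lambda=\bigoplus_i\mathbb Z\lambda_i$. Define $\alpha^\diamond=\sum_{i\text{ odd}}\alpha_i$ if $\mathfrak g$ is of type $A_n$, and $\alpha^\diamond=\alpha_{n-1}+\alpha_n$ if $\mathfrak g$ is of type $D_n$. *)

theory Defs
  imports Main
begin

text \<open>Vectors of the weight lattice are written in the basis of fundamental
  weights lambda_1..lambda_r, as functions nat => int supported on {1..r}.
  The simple root alpha_i has coordinates the i-th row of the Cartan matrix: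
  alpha_i = sum_j <alpha_i, alpha_j^vee> lambda_j.  Bourbaki labelling.\<close>

datatype ctype = A nat | B nat | C nat | D nat | E6 | E7 | E8 | F4 | G2

fun valid_type :: "ctype \<Rightarrow> bool" where
  "valid_type (A n) = (n \<ge> 1)"
| "valid_type (B n) = (n \<ge> 2)"
| "valid_type (C n) = (n \<ge> 3)"
| "valid_type (D n) = (n \<ge> 4)"
| "valid_type _ = True"

fun rank :: "ctype \<Rightarrow> nat" where
  "rank (A n) = n" | "rank (B n) = n" | "rank (C n) = n" | "rank (D n) = n"
| "rank E6 = 6" | "rank E7 = 7" | "rank E8 = 8" | "rank F4 = 4" | "rank G2 = 2"

definition chain_edges :: "nat \<Rightarrow> (nat \<times> nat) set" where
  "chain_edges n = {(i, i + 1) | i. 1 \<le> i \<and> i < n}"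

definition E_edges :: "(nat \<times> nat) set" where
  "E_edges = {(1,3),(3,4),(4,5),(5,6),(2,4)}"

fun edges :: "ctype \<Rightarrow> (nat \<times> nat) set" where
  "edges (A n) = chain_edges n"
| "edges (B n) = chain_edges n"
| "edges (C n) = chain_edges n"
| "edges (D n) = chain_edges (n - 1) \<union> {(n - 2, n)}"
| "edges E6 = E_edges"
| "edges E7 = E_edges \<union> {(6,7)}"
| "edges E8 = E_edges \<union> {(6,7),(7,8)}"
| "edges F4 = chain_edges 4"
| "edges G2 = chain_edges 2"

definition adjacent :: "ctype \<Rightarrow> nat \<Rightarrow> nat \<Rightarrow> bool" where
  "adjacent t i j = ((i, j) \<in> edges t \<or> (j, i) \<in> edges t)"

text \<open>Cartan matrix entry a_ij = <alpha_i, alpha_j^vee> = 2(alpha_i,alpha_j)/(alpha_j,alpha_j).\<close>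
definition cartan :: "ctype \<Rightarrow> nat \<Rightarrow> nat \<Rightarrow> int" where
  "cartan t i j =
     (if i = j then 2
      else if adjacent t i j then
        (case t of
           B n \<Rightarrow> (if (i, j) = (n - 1, n) then -2 else -1)
         | C n \<Rightarrow> (if (i, j) = (n, n - 1) then -2 else -1)
         | F4 \<Rightarrow> (if (i, j) = (2, 3) then -2 else -1)
         | G2 \<Rightarrow> (if (i, j) = (2, 1) then -3 else -1)
         | _ \<Rightarrow> -1)
      else 0)"

definition idx :: "ctype \<Rightarrow> nat set" where
  "idx t = {1..rank t}"

definition weight_lattice :: "ctype \<Rightarrow> (nat \<Rightarrow> int) set" where
  "weight_lattice t = {v. \<forall>j. j \<notin> idx t \<longrightarrow> v j = 0}"

definition fund_weight :: "ctype \<Rightarrow> nat \<Rightarrow> nat \<Rightarrow> int" where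
  "fund_weight t i = (\<lambda>j. if j = i \<and> j \<in> idx t then 1 else 0)"

definition simple_root :: "ctype \<Rightarrow> nat \<Rightarrow> nat \<Rightarrow> int" where
  "simple_root t i = (\<lambda>j. if j \<in> idx t then cartan t i j else 0)"

definition root_lattice :: "ctype \<Rightarrow> (nat \<Rightarrow> int) set" where
  "root_lattice t =
     {v. \<exists>c :: nat \<Rightarrow> int. v = (\<lambda>j. \<Sum>i\<in>idx t. c i * simple_root t i j)}"

definition scale :: "int \<Rightarrow> (nat \<Rightarrow> int) set \<Rightarrow> (nat \<Rightarrow> int) set" where
  "scale k S = (\<lambda>v j. k * v j) ` S"

definition alpha_diamond :: "ctype \<Rightarrow> nat \<Rightarrow> int" where
  "alpha_diamond t =
     (case t of
        A n \<Rightarrow> (\<lambda>j. \<Sum>i\<in>{i\<in>idx t. odd i}. simple_root t i j)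
      | D n \<Rightarrow> (\<lambda>j. simple_root t (n - 1) j + simple_root t n j)
      | _ \<Rightarrow> (\<lambda>j. 0))"

definition twoQ_plus_diamond :: "ctype \<Rightarrow> (nat \<Rightarrow> int) set" where
  "twoQ_plus_diamond t =
     {v. \<exists>u\<in>scale 2 (root_lattice t). \<exists>m :: int. v = (\<lambda>j. u j + m * alpha_diamond t j)}"

end

theory Submission
  imports Defs
begin

text \<open>
  In coordinates with respect to the fundamental weights the simple root alpha_i is the i-th row
  of the Cartan matrix A, so c_1 alpha_1 + ... + c_r alpha_r lies in 2 Lambda iff c A \<equiv> 0 (mod 2).
  Hence Q \<inter> 2 Lambda is 2Q plus the root combinations whose coefficients lie in the kernel of A
  over GF(2). That kernel is trivial for A_2k and E_6 (det A is odd), and spanned by the coefficients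
  of alpha-diamond for A_2k+1 and D_2k+3. In the remaining types every 2 lambda_k lies in Q, so
  2 Lambda \<subseteq> Q, and for E_8, F_4, G_2 even Lambda = Q. Membership s lambda_k \<in> Q is witnessed
  by the k-th row of s A^-1, non-membership by an integer vector g with A g \<equiv> 0 (mod m) such that
  m does not divide s g_k.
\<close>

section \<open>Root combinations in weight coordinates\<close>

definition root_comb :: "ctype \<Rightarrow> (nat \<Rightarrow> int) \<Rightarrow> nat \<Rightarrow> int" where
  "root_comb t c = (\<lambda>j. \<Sum>i\<in>idx t. c i * simple_root t i j)"

definition root_comb_coeff :: "ctype \<Rightarrow> (nat \<Rightarrow> int) \<Rightarrow> nat \<Rightarrow> int" where
  "root_comb_coeff t c j = (\<Sum>i\<in>idx t. c i * cartan t i j)"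

lemma finite_idx [simp]: "finite (idx t)"
  by (simp add: idx_def)

lemma root_lattice_eq_range: "root_lattice t = range (root_comb t)"
  unfolding root_lattice_def root_comb_def by auto

lemma root_comb_in_root_lattice [simp]: "root_comb t c \<in> root_lattice t"
  by (simp add: root_lattice_eq_range)

lemma root_comb_apply: "root_comb t c j = (if j \<in> idx t then root_comb_coeff t c j else 0)"
  unfolding root_comb_def root_comb_coeff_def simple_root_def by auto

lemma root_comb_cong: "(\<And>i. i \<in> idx t \<Longrightarrow> c i = d i) \<Longrightarrow> root_comb t c = root_comb t d"
  unfolding root_comb_def by (auto intro!: sum.cong ext)

lemma root_comb_add: "root_comb t (\<lambda>i. c i + d i) = (\<lambda>j. root_comb t c j + root_comb t d j)"
  unfolding root_comb_def by (auto simp: algebra_simps sum.distrib)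

lemma root_comb_scale: "root_comb t (\<lambda>i. k * c i) = (\<lambda>j. k * root_comb t c j)"
  unfolding root_comb_def by (auto simp: sum_distrib_left mult.assoc)

lemma root_comb_sum:
  "finite S \<Longrightarrow> root_comb t (\<lambda>i. \<Sum>x\<in>S. f x i) = (\<lambda>j. \<Sum>x\<in>S. root_comb t (f x) j)"
  unfolding root_comb_def by (auto simp: sum_distrib_right sum.swap[of _ S])

lemma root_lattice_add:
  "x \<in> root_lattice t \<Longrightarrow> y \<in> root_lattice t \<Longrightarrow> (\<lambda>j. x j + y j) \<in> root_lattice t"
  by (auto simp: root_lattice_eq_range root_comb_add[symmetric])

lemma root_lattice_scale: "x \<in> root_lattice t \<Longrightarrow> (\<lambda>j. k * x j) \<in> root_lattice t"
  by (auto simp: root_lattice_eq_range root_comb_scale[symmetric])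

lemma root_lattice_sum:
  assumes "finite S" "\<And>i. i \<in> S \<Longrightarrow> f i \<in> root_lattice t"
  shows "(\<lambda>j. \<Sum>i\<in>S. f i j) \<in> root_lattice t"
proof -
  have "\<forall>i\<in>S. \<exists>c. f i = root_comb t c"
    using assms(2) by (auto simp: root_lattice_eq_range)
  then obtain C where C: "\<And>i. i \<in> S \<Longrightarrow> f i = root_comb t (C i)"
    by metis
  have "(\<lambda>j. \<Sum>i\<in>S. f i j) = root_comb t (\<lambda>x. \<Sum>i\<in>S. C i x)"
    using C by (simp add: root_comb_sum[OF assms(1)])
  then show ?thesis by simp
qed

lemma fund_weight_in_weight_lattice [simp]: "fund_weight t k \<in> weight_lattice t"
  by (simp add: fund_weight_def weight_lattice_def)

lemma root_lattice_subset_weight_lattice: "root_lattice t \<subseteq> weight_lattice t"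
  by (auto simp: root_lattice_eq_range weight_lattice_def root_comb_apply)

lemma scale_2_eq_iff: "scale 2 X = scale 2 Y \<longleftrightarrow> X = Y"
proof -
  have "inj (\<lambda>(v :: nat \<Rightarrow> int) j. 2 * v j)"
    by (auto simp: inj_def fun_eq_iff)
  then show ?thesis
    unfolding scale_def by (metis inj_image_eq_iff)
qed

lemma mem_scale_2_iff: "(\<lambda>j. 2 * v j) \<in> scale 2 X \<longleftrightarrow> v \<in> X"
proof -
  have "inj (\<lambda>(v :: nat \<Rightarrow> int) j. 2 * v j)"
    by (auto simp: inj_def fun_eq_iff)
  then show ?thesis
    unfolding scale_def by (metis inj_image_mem_iff)
qed

lemma mem_scale_2_weight_lattice_iff:
  "v \<in> scale 2 (weight_lattice t) \<longleftrightarrow> (\<forall>j. even (v j)) \<and> v \<in> weight_lattice t"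
proof
  assume "(\<forall>j. even (v j)) \<and> v \<in> weight_lattice t"
  then have "v = (\<lambda>j. 2 * (v j div 2))" and "(\<lambda>j. v j div 2) \<in> weight_lattice t"
    by (auto simp: fun_eq_iff weight_lattice_def)
  then show "v \<in> scale 2 (weight_lattice t)"
    by (metis mem_scale_2_iff)
qed (auto simp: scale_def weight_lattice_def)

lemma scale_2_root_lattice_subset: "scale 2 (root_lattice t) \<subseteq> root_lattice t"
  by (auto simp: scale_def intro: root_lattice_scale)

lemma weight_multiple_in_root_lattice:
  assumes "\<And>k. k \<in> idx t \<Longrightarrow> (\<lambda>j. s * fund_weight t k j) \<in> root_lattice t"
    and "w \<in> weight_lattice t"
  shows "(\<lambda>j. s * w j) \<in> root_lattice t"
proof -
  have "s * w j = (\<Sum>k\<in>idx t. w k * (s * fund_weight t k j))" for j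
    using assms(2) unfolding fund_weight_def weight_lattice_def
    by (cases "j \<in> idx t") (auto simp: if_distrib cong: if_cong)
  then have "(\<lambda>j. s * w j) = (\<lambda>j. \<Sum>k\<in>idx t. w k * (s * fund_weight t k j))"
    by simp
  also have "\<dots> \<in> root_lattice t"
    by (intro root_lattice_sum root_lattice_scale assms(1)) simp
  finally show ?thesis .
qed

lemma fund_weight_multiple_in_root_lattice:
  assumes "\<And>j. j \<in> idx t \<Longrightarrow> root_comb_coeff t c j = (if j = k then s else 0)"
  shows "(\<lambda>j. s * fund_weight t k j) \<in> root_lattice t"
proof -
  have "root_comb t c = (\<lambda>j. s * fund_weight t k j)"
    using assms by (auto simp: root_comb_apply fund_weight_def)
  then show ?thesis by (metis root_comb_in_root_lattice)
qed

text \<open>If A g \<equiv> 0 (mod m), pairing with g is a functional on the weight lattice that is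
  \<equiv> 0 (mod m) on the root lattice.\<close>

lemma fund_weight_multiple_notin_root_lattice:
  assumes g: "\<And>i. i \<in> idx t \<Longrightarrow> m dvd (\<Sum>j\<in>idx t. cartan t i j * g j)"
    and "k \<in> idx t" "\<not> m dvd s * g k"
  shows "(\<lambda>j. s * fund_weight t k j) \<notin> root_lattice t"
proof
  assume "(\<lambda>j. s * fund_weight t k j) \<in> root_lattice t"
  then obtain c where c: "(\<lambda>j. s * fund_weight t k j) = root_comb t c"
    by (auto simp: root_lattice_eq_range)
  have "s * g k = (\<Sum>j\<in>idx t. if j = k then s * g k else 0)"
    using \<open>k \<in> idx t\<close> by simp
  also have "\<dots> = (\<Sum>j\<in>idx t. root_comb t c j * g j)"
    unfolding c[symmetric] by (rule sum.cong) (auto simp: fund_weight_def)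
  also have "\<dots> = (\<Sum>j\<in>idx t. \<Sum>i\<in>idx t. c i * cartan t i j * g j)"
    by (simp add: root_comb_apply root_comb_coeff_def sum_distrib_right)
  also have "\<dots> = (\<Sum>i\<in>idx t. c i * (\<Sum>j\<in>idx t. cartan t i j * g j))"
    by (subst sum.swap) (simp add: sum_distrib_left mult.assoc)
  finally have "m dvd s * g k"
    using g by (auto intro!: dvd_sum)
  with assms(3) show False ..
qed

lemma cartan_row_sum_eq_root_comb_coeff:
  assumes "idx t' = idx t" and "\<And>i j. cartan t i j = cartan t' j i"
  shows "(\<Sum>j\<in>idx t. cartan t i j * g j) = root_comb_coeff t' g i"
  unfolding root_comb_coeff_def assms by (simp add: mult.commute)

section \<open>The mod 2 kernel of the Cartan matrix\<close>

text \<open>The map c \<mapsto> root_comb_coeff t c is the transposed Cartan matrix; the predicate says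
  that its kernel over GF(2) is spanned by d (d = 0: the Cartan matrix is invertible mod 2).\<close>

definition mod2_cartan_kernel_spanned_by :: "ctype \<Rightarrow> (nat \<Rightarrow> int) \<Rightarrow> bool" where
  "mod2_cartan_kernel_spanned_by t d \<longleftrightarrow>
     (\<forall>j\<in>idx t. even (root_comb_coeff t d j)) \<and>
     (\<forall>c. (\<forall>j\<in>idx t. even (root_comb_coeff t c j)) \<longrightarrow> (\<exists>m. \<forall>i\<in>idx t. even (c i - m * d i)))"

lemma root_lattice_inter_scale_2_weight_lattice:
  assumes "mod2_cartan_kernel_spanned_by t d"
  shows "root_lattice t \<inter> scale 2 (weight_lattice t) =
    {v. \<exists>u\<in>scale 2 (root_lattice t). \<exists>m. v = (\<lambda>j. u j + m * root_comb t d j)}"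
proof (intro equalityI subsetI)
  fix v assume v: "v \<in> root_lattice t \<inter> scale 2 (weight_lattice t)"
  then obtain c where c: "v = root_comb t c"
    by (auto simp: root_lattice_eq_range)
  have "\<forall>j\<in>idx t. even (root_comb_coeff t c j)"
  proof
    fix j assume "j \<in> idx t"
    moreover have "even (v j)"
      using v by (simp add: mem_scale_2_weight_lattice_iff)
    ultimately show "even (root_comb_coeff t c j)"
      by (simp add: c root_comb_apply)
  qed
  then obtain m where m: "\<And>i. i \<in> idx t \<Longrightarrow> even (c i - m * d i)"
    using assms by (auto simp: mod2_cartan_kernel_spanned_by_def)
  define c' where "c' i = (c i - m * d i) div 2" for i
  have "v = root_comb t (\<lambda>i. 2 * c' i + m * d i)"
    unfolding c c'_def using m by (intro root_comb_cong) simp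
  then have "v = (\<lambda>j. 2 * root_comb t c' j + m * root_comb t d j)"
    by (simp add: root_comb_add root_comb_scale)
  then show "v \<in> {v. \<exists>u\<in>scale 2 (root_lattice t). \<exists>m. v = (\<lambda>j. u j + m * root_comb t d j)}"
    by (intro CollectI bexI[of _ "\<lambda>j. 2 * root_comb t c' j"] exI[of _ m]) (simp_all add: mem_scale_2_iff)
next
  fix v assume "v \<in> {v. \<exists>u\<in>scale 2 (root_lattice t). \<exists>m. v = (\<lambda>j. u j + m * root_comb t d j)}"
  then obtain c m where v: "v = (\<lambda>j. 2 * root_comb t c j + m * root_comb t d j)"
    by (auto simp: scale_def root_lattice_eq_range)
  then have "v = root_comb t (\<lambda>i. 2 * c i + m * d i)"
    by (simp add: root_comb_add root_comb_scale)
  then have "v \<in> root_lattice t"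
    by simp
  moreover have "even (v j)" for j
    using assms by (simp add: v mod2_cartan_kernel_spanned_by_def root_comb_apply)
  ultimately show "v \<in> root_lattice t \<inter> scale 2 (weight_lattice t)"
    using root_lattice_subset_weight_lattice by (auto simp: mem_scale_2_weight_lattice_iff)
qed

lemma lattices_case_a:
  assumes "mod2_cartan_kernel_spanned_by t (\<lambda>_. 0)" and "fund_weight t k \<notin> root_lattice t"
  shows "root_lattice t \<inter> scale 2 (weight_lattice t) = scale 2 (root_lattice t) \<and>
    scale 2 (root_lattice t) \<noteq> scale 2 (weight_lattice t)"
proof
  have "root_comb t (\<lambda>_. 0) = (\<lambda>_. 0)"
    by (simp add: root_comb_def)
  then show "root_lattice t \<inter> scale 2 (weight_lattice t) = scale 2 (root_lattice t)"
    by (simp add: root_lattice_inter_scale_2_weight_lattice[OF assms(1)])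
  show "scale 2 (root_lattice t) \<noteq> scale 2 (weight_lattice t)"
    using assms(2) by (auto simp: scale_2_eq_iff)
qed

lemma lattices_case_b:
  assumes "\<And>k. k \<in> idx t \<Longrightarrow> (\<lambda>j. 2 * fund_weight t k j) \<in> root_lattice t"
    and "fund_weight t k \<notin> root_lattice t"
  shows "root_lattice t \<inter> scale 2 (weight_lattice t) = scale 2 (weight_lattice t) \<and>
    scale 2 (weight_lattice t) \<noteq> scale 2 (root_lattice t)"
proof
  have "scale 2 (weight_lattice t) \<subseteq> root_lattice t"
    using weight_multiple_in_root_lattice[OF assms(1)] by (auto simp: scale_def)
  then show "root_lattice t \<inter> scale 2 (weight_lattice t) = scale 2 (weight_lattice t)"
    by blast
  show "scale 2 (weight_lattice t) \<noteq> scale 2 (root_lattice t)"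
    using assms(2) by (auto simp: scale_2_eq_iff)
qed

lemma lattices_case_c:
  assumes "\<And>k. k \<in> idx t \<Longrightarrow> fund_weight t k \<in> root_lattice t"
  shows "root_lattice t \<inter> scale 2 (weight_lattice t) = scale 2 (weight_lattice t) \<and>
    scale 2 (weight_lattice t) = scale 2 (root_lattice t)"
proof -
  have "weight_lattice t \<subseteq> root_lattice t"
    using weight_multiple_in_root_lattice[of t 1] assms by auto
  then have eq: "root_lattice t = weight_lattice t"
    using root_lattice_subset_weight_lattice by blast
  have "scale 2 (root_lattice t) \<subseteq> root_lattice t"
    by (rule scale_2_root_lattice_subset)
  then show ?thesis
    unfolding eq by blast
qed

lemma lattices_case_d:
  assumes "mod2_cartan_kernel_spanned_by t d" and "alpha_diamond t = root_comb t d"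
    and "(\<lambda>j. 2 * fund_weight t k j) \<notin> root_lattice t"
  shows "root_lattice t \<inter> scale 2 (weight_lattice t) = twoQ_plus_diamond t \<and>
    twoQ_plus_diamond t \<noteq> scale 2 (weight_lattice t)"
proof
  show eq: "root_lattice t \<inter> scale 2 (weight_lattice t) = twoQ_plus_diamond t"
    unfolding root_lattice_inter_scale_2_weight_lattice[OF assms(1)] twoQ_plus_diamond_def assms(2) ..
  have "(\<lambda>j. 2 * fund_weight t k j) \<in> scale 2 (weight_lattice t)"
    by (simp add: mem_scale_2_iff)
  then show "twoQ_plus_diamond t \<noteq> scale 2 (weight_lattice t)"
    using assms(3) eq by blast
qed

section \<open>Exceptional types\<close>

definition matrix_of_rows :: "int list list \<Rightarrow> nat \<Rightarrow> nat \<Rightarrow> int" where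
  "matrix_of_rows rs i j = rs ! (i - 1) ! (j - 1)"

definition scaled_inverse_cartan :: "ctype \<Rightarrow> int \<Rightarrow> (nat \<Rightarrow> nat \<Rightarrow> int) \<Rightarrow> bool" where
  "scaled_inverse_cartan t N M \<longleftrightarrow> (\<forall>i\<in>idx t. \<forall>k\<in>idx t.
     (\<Sum>j\<in>idx t. M i j * cartan t j k) = (if i = k then N else 0) \<and>
     (\<Sum>j\<in>idx t. cartan t i j * M j k) = (if i = k then N else 0))"

lemma scaled_inverse_cartan_fund_weight_multiple_in_root_lattice:
  assumes "scaled_inverse_cartan t N M" and "k \<in> idx t"
  shows "(\<lambda>j. N * fund_weight t k j) \<in> root_lattice t"
  by (rule fund_weight_multiple_in_root_lattice[where c = "M k"])
    (use assms in \<open>simp add: scaled_inverse_cartan_def root_comb_coeff_def\<close>)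

lemma scaled_inverse_cartan_fund_weight_multiple_notin_root_lattice:
  assumes "scaled_inverse_cartan t N M" and "k \<in> idx t" and "\<not> N dvd s * M k k"
  shows "(\<lambda>j. s * fund_weight t k j) \<notin> root_lattice t"
  by (rule fund_weight_multiple_notin_root_lattice[where g = "\<lambda>j. M j k" and m = N])
    (use assms in \<open>auto simp: scaled_inverse_cartan_def\<close>)

lemma scaled_inverse_cartan_mod2_kernel_trivial:
  assumes M: "scaled_inverse_cartan t N M" and "odd N"
  shows "mod2_cartan_kernel_spanned_by t (\<lambda>_. 0)"
proof -
  have "even (c l)" if ev: "\<forall>j\<in>idx t. even (root_comb_coeff t c j)" and l: "l \<in> idx t" for c l
  proof -
    have "N * c l = (\<Sum>i\<in>idx t. c i * (if i = l then N else 0))"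
      using l by (simp add: if_distrib cong: if_cong)
    also have "\<dots> = (\<Sum>i\<in>idx t. c i * (\<Sum>j\<in>idx t. cartan t i j * M j l))"
      using M l by (intro sum.cong) (auto simp: scaled_inverse_cartan_def)
    also have "\<dots> = (\<Sum>j\<in>idx t. root_comb_coeff t c j * M j l)"
      unfolding root_comb_coeff_def sum_distrib_left sum_distrib_right
      by (subst sum.swap) (simp add: mult.assoc)
    finally have "even (N * c l)"
      using ev by (auto intro: dvd_sum)
    with \<open>odd N\<close> show "even (c l)"
      by simp
  qed
  then show ?thesis
    by (auto simp: mod2_cartan_kernel_spanned_by_def root_comb_coeff_def)
qed

lemma idx_E6: "idx E6 = {1, 2, 3, 4, 5, 6}"
  by (auto simp: idx_def)

lemma idx_E7: "idx E7 = {1, 2, 3, 4, 5, 6, 7}"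
  by (auto simp: idx_def)

lemma idx_E8: "idx E8 = {1, 2, 3, 4, 5, 6, 7, 8}"
  by (auto simp: idx_def)

lemma idx_F4: "idx F4 = {1, 2, 3, 4}"
  by (auto simp: idx_def)

lemma idx_G2: "idx G2 = {1, 2}"
  by (auto simp: idx_def)

lemmas cartan_exceptional_simps = cartan_def adjacent_def E_edges_def chain_edges_def

lemma scaled_inverse_cartan_E6:
  "scaled_inverse_cartan E6 3 (matrix_of_rows
     [[4, 3, 5, 6, 4, 2], [3, 6, 6, 9, 6, 3], [5, 6, 10, 12, 8, 4],
      [6, 9, 12, 18, 12, 6], [4, 6, 8, 12, 10, 5], [2, 3, 4, 6, 5, 4]])"
  by (simp add: scaled_inverse_cartan_def idx_E6 matrix_of_rows_def cartan_exceptional_simps)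

lemma scaled_inverse_cartan_E7:
  "scaled_inverse_cartan E7 2 (matrix_of_rows
     [[4, 4, 6, 8, 6, 4, 2], [4, 7, 8, 12, 9, 6, 3], [6, 8, 12, 16, 12, 8, 4],
      [8, 12, 16, 24, 18, 12, 6], [6, 9, 12, 18, 15, 10, 5], [4, 6, 8, 12, 10, 8, 4],
      [2, 3, 4, 6, 5, 4, 3]])"
  by (simp add: scaled_inverse_cartan_def idx_E7 matrix_of_rows_def cartan_exceptional_simps)

lemma scaled_inverse_cartan_E8:
  "scaled_inverse_cartan E8 1 (matrix_of_rows
     [[4, 5, 7, 10, 8, 6, 4, 2], [5, 8, 10, 15, 12, 9, 6, 3], [7, 10, 14, 20, 16, 12, 8, 4],
      [10, 15, 20, 30, 24, 18, 12, 6], [8, 12, 16, 24, 20, 15, 10, 5], [6, 9, 12, 18, 15, 12, 8, 4],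
      [4, 6, 8, 12, 10, 8, 6, 3], [2, 3, 4, 6, 5, 4, 3, 2]])"
  by (simp add: scaled_inverse_cartan_def idx_E8 matrix_of_rows_def cartan_exceptional_simps)

lemma scaled_inverse_cartan_F4:
  "scaled_inverse_cartan F4 1 (matrix_of_rows [[2, 3, 4, 2], [3, 6, 8, 4], [2, 4, 6, 3], [1, 2, 3, 2]])"
  by (simp add: scaled_inverse_cartan_def idx_F4 matrix_of_rows_def cartan_exceptional_simps)

lemma scaled_inverse_cartan_G2:
  "scaled_inverse_cartan G2 1 (matrix_of_rows [[2, 1], [3, 2]])"
  by (simp add: scaled_inverse_cartan_def idx_G2 matrix_of_rows_def cartan_exceptional_simps)

lemma lattices_E6:
  "root_lattice E6 \<inter> scale 2 (weight_lattice E6) = scale 2 (root_lattice E6) \<and>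
   scale 2 (root_lattice E6) \<noteq> scale 2 (weight_lattice E6)"
  using lattices_case_a[OF scaled_inverse_cartan_mod2_kernel_trivial[OF scaled_inverse_cartan_E6]]
    scaled_inverse_cartan_fund_weight_multiple_notin_root_lattice[OF scaled_inverse_cartan_E6, of 1 1]
  by (simp add: idx_E6 matrix_of_rows_def)

lemma lattices_E7:
  "root_lattice E7 \<inter> scale 2 (weight_lattice E7) = scale 2 (weight_lattice E7) \<and>
   scale 2 (weight_lattice E7) \<noteq> scale 2 (root_lattice E7)"
  using lattices_case_b[OF scaled_inverse_cartan_fund_weight_multiple_in_root_lattice[OF scaled_inverse_cartan_E7]]
    scaled_inverse_cartan_fund_weight_multiple_notin_root_lattice[OF scaled_inverse_cartan_E7, of 2 1]
  by (simp add: idx_E7 matrix_of_rows_def)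

lemma lattices_E8_F4_G2:
  assumes "t = E8 \<or> t = F4 \<or> t = G2"
  shows "root_lattice t \<inter> scale 2 (weight_lattice t) = scale 2 (weight_lattice t) \<and>
    scale 2 (weight_lattice t) = scale 2 (root_lattice t)"
  using assms lattices_case_c
    scaled_inverse_cartan_fund_weight_multiple_in_root_lattice[OF scaled_inverse_cartan_E8]
    scaled_inverse_cartan_fund_weight_multiple_in_root_lattice[OF scaled_inverse_cartan_F4]
    scaled_inverse_cartan_fund_weight_multiple_in_root_lattice[OF scaled_inverse_cartan_G2]
  by fastforce

section \<open>Types A, B and C\<close>

text \<open>The hypothesis says c (j + 1) \<equiv> c (j - 1) (mod 2), with c 0 read as 0.\<close>

lemma parity_along_chain:
  fixes c :: "nat \<Rightarrow> int"
  assumes rel: "\<And>j. 1 \<le> j \<Longrightarrow> j \<le> N \<Longrightarrow> even (2 * c j - (if 2 \<le> j then c (j - 1) else 0) - c (j + 1))"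
    and "1 \<le> i" "i \<le> N + 1"
  shows "even (c i - (if odd i then c 1 else 0))"
  using assms(2,3)
proof (induction i rule: less_induct)
  case (less i)
  consider "i = 1" | "i = 2" | "i \<ge> 3"
    using less.prems by linarith
  then show ?case
  proof cases
    case 2
    then show ?thesis
      using rel[of 1] less.prems by (simp add: numeral_2_eq_2)
  next
    case 3
    define m where "m = i - 2"
    have m: "i = m + 2" "m \<ge> 1"
      using 3 by (auto simp: m_def)
    have "even (2 * c (m + 1) - c m - c (m + 2))"
      using rel[of "m + 1"] less.prems m by (simp add: numeral_2_eq_2)
    moreover have "even (c m - (if odd m then c 1 else 0))"
      using less.IH[of m] less.prems m by simp
    ultimately show ?thesis
      using m by presburger
  qed simp
qed

lemma root_comb_coeff_chain_column:
  assumes "idx t = {1..n}" and j: "j \<in> {1..n}"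
    and col: "\<And>i. i \<in> {1..n} \<Longrightarrow>
      cartan t i j = (if i = j then 2 else if i + 1 = j then - a else if i = j + 1 then - b else 0)"
  shows "root_comb_coeff t c j =
    2 * c j - (if 2 \<le> j then a * c (j - 1) else 0) - (if j + 1 \<le> n then b * c (j + 1) else 0)"
proof -
  have "root_comb_coeff t c j = (\<Sum>i\<in>{1..n}. (if i = j then 2 * c j else 0)
      + (if i = j - 1 then (if 2 \<le> j then - a * c (j - 1) else 0) else 0)
      + (if i = j + 1 then - b * c (j + 1) else 0))"
    unfolding root_comb_coeff_def assms(1) by (rule sum.cong[OF refl]) (use j col in auto)
  also have "\<dots> = 2 * c j - (if 2 \<le> j then a * c (j - 1) else 0) - (if j + 1 \<le> n then b * c (j + 1) else 0)"
    using j by (auto simp: sum.distrib)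
  finally show ?thesis .
qed

lemma idx_classical:
  "idx (A n) = {1..n}" "idx (B n) = {1..n}" "idx (C n) = {1..n}" "idx (D n) = {1..n}"
  by (simp_all add: idx_def)

lemma cartan_A:
  "i \<in> {1..n} \<Longrightarrow> j \<in> {1..n} \<Longrightarrow>
    cartan (A n) i j = (if i = j then 2 else if i + 1 = j then - 1 else if i = j + 1 then - 1 else 0)"
  by (auto simp: cartan_def adjacent_def chain_edges_def)

lemma cartan_B:
  "i \<in> {1..n} \<Longrightarrow> j \<in> {1..n} \<Longrightarrow>
    cartan (B n) i j = (if i = j then 2 else if i + 1 = j then - (if j = n then 2 else 1)
      else if i = j + 1 then - 1 else 0)"
  by (auto simp: cartan_def adjacent_def chain_edges_def)

lemma cartan_C_eq_cartan_B_transpose: "cartan (C n) i j = cartan (B n) j i"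
  by (auto simp: cartan_def adjacent_def)

lemma root_comb_coeff_A:
  "j \<in> {1..n} \<Longrightarrow> root_comb_coeff (A n) c j =
    2 * c j - (if 2 \<le> j then c (j - 1) else 0) - (if j + 1 \<le> n then c (j + 1) else 0)"
  using root_comb_coeff_chain_column[of "A n" n j 1 1 c] by (simp add: idx_classical cartan_A)

lemma root_comb_coeff_B:
  "j \<in> {1..n} \<Longrightarrow> root_comb_coeff (B n) c j =
    2 * c j - (if 2 \<le> j then (if j = n then 2 else 1) * c (j - 1) else 0) - (if j + 1 \<le> n then c (j + 1) else 0)"
  using root_comb_coeff_chain_column[of "B n" n j "if j = n then 2 else 1" 1 c]
  by (simp add: idx_classical cartan_B)

lemma root_comb_coeff_C:
  "j \<in> {1..n} \<Longrightarrow> root_comb_coeff (C n) c j =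
    2 * c j - (if 2 \<le> j then c (j - 1) else 0) - (if j + 1 \<le> n then (if j + 1 = n then 2 else 1) * c (j + 1) else 0)"
  using root_comb_coeff_chain_column[of "C n" n j 1 "if j + 1 = n then 2 else 1" c]
  by (simp add: idx_classical cartan_C_eq_cartan_B_transpose cartan_B)

lemma cartan_A_symmetric: "cartan (A n) i j = cartan (A n) j i"
  by (auto simp: cartan_def adjacent_def)

lemma fund_weight_A_multiple_notin_root_lattice:
  assumes "n \<ge> 1" and "\<not> int (n + 1) dvd s"
  shows "(\<lambda>j. s * fund_weight (A n) 1 j) \<notin> root_lattice (A n)"
proof (rule fund_weight_multiple_notin_root_lattice[where g = int and m = "int (n + 1)"])
  fix i assume i: "i \<in> idx (A n)"
  have "(\<Sum>j\<in>idx (A n). cartan (A n) i j * int j) = root_comb_coeff (A n) int i"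
    by (rule cartan_row_sum_eq_root_comb_coeff) (simp_all add: cartan_A_symmetric)
  also have "\<dots> = (if i = n then int n + 1 else 0)"
    using i by (auto simp: idx_classical root_comb_coeff_A)
  finally show "int (n + 1) dvd (\<Sum>j\<in>idx (A n). cartan (A n) i j * int j)"
    by (simp add: add.commute)
qed (use assms in \<open>auto simp: idx_classical\<close>)

lemma parity_of_mod2_cartan_kernel_A:
  assumes "\<forall>j\<in>idx (A n). even (root_comb_coeff (A n) c j)" and "i \<in> {1..n}"
  shows "even (c i - (if odd i then c 1 else 0))"
proof (rule parity_along_chain[of "n - 1"])
  fix j assume "1 \<le> j" "j \<le> n - 1"
  then show "even (2 * c j - (if 2 \<le> j then c (j - 1) else 0) - c (j + 1))"
    using assms(1) by (auto simp: idx_classical root_comb_coeff_A)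
qed (use assms(2) in auto)

lemma mod2_cartan_kernel_A_even:
  assumes "even n" and "n \<ge> 2"
  shows "mod2_cartan_kernel_spanned_by (A n) (\<lambda>_. 0)"
proof -
  have "even (c i)" if ev: "\<forall>j\<in>idx (A n). even (root_comb_coeff (A n) c j)" and i: "i \<in> idx (A n)" for c i
  proof -
    have "even (root_comb_coeff (A n) c n)"
      using ev assms by (simp add: idx_classical)
    then have "even (c (n - 1))"
      using assms by (simp add: root_comb_coeff_A)
    moreover have "even (c (n - 1) - c 1)"
      using parity_of_mod2_cartan_kernel_A[OF ev, of "n - 1"] assms by simp
    ultimately have "even (c 1)"
      by presburger
    then show "even (c i)"
      using parity_of_mod2_cartan_kernel_A[OF ev, of i] i by (auto simp: idx_classical split: if_splits)
  qed
  then show ?thesis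
    by (auto simp: mod2_cartan_kernel_spanned_by_def root_comb_coeff_def)
qed

lemma mod2_cartan_kernel_A_odd:
  assumes "odd n"
  shows "mod2_cartan_kernel_spanned_by (A n) (\<lambda>i. if odd i then 1 else 0)"
  unfolding mod2_cartan_kernel_spanned_by_def
proof (intro conjI allI impI ballI)
  fix j assume j: "j \<in> idx (A n)"
  show "even (root_comb_coeff (A n) (\<lambda>i. if odd i then 1 else 0) j)"
  proof (cases "odd j")
    case True
    then have "even (j - 1)" "even (j + 1)"
      by auto
    with True j show ?thesis
      by (simp add: idx_classical root_comb_coeff_A)
  next
    case False
    then have "2 \<le> j" "j + 1 \<le> n" "odd (j - 1)" "odd (j + 1)"
      using j assms by (auto simp: idx_classical elim!: evenE oddE)
    with False j show ?thesis
      by (simp add: idx_classical root_comb_coeff_A)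
  qed
next
  fix c assume ev: "\<forall>j\<in>idx (A n). even (root_comb_coeff (A n) c j)"
  show "\<exists>m. \<forall>i\<in>idx (A n). even (c i - m * (if odd i then 1 else 0))"
  proof (intro exI[of _ "c 1"] ballI)
    fix i assume "i \<in> idx (A n)"
    then show "even (c i - c 1 * (if odd i then 1 else 0))"
      using parity_of_mod2_cartan_kernel_A[OF ev, of i] by (simp add: idx_classical)
  qed
qed

lemma alpha_diamond_A: "alpha_diamond (A n) = root_comb (A n) (\<lambda>i. if odd i then 1 else 0)"
  unfolding alpha_diamond_def root_comb_def by (auto simp: sum.inter_filter intro!: sum.cong)

lemma lattices_A_even:
  assumes "k \<ge> 1"
  shows "root_lattice (A (2 * k)) \<inter> scale 2 (weight_lattice (A (2 * k))) = scale 2 (root_lattice (A (2 * k))) \<and>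
    scale 2 (root_lattice (A (2 * k))) \<noteq> scale 2 (weight_lattice (A (2 * k)))"
  using lattices_case_a[OF mod2_cartan_kernel_A_even] fund_weight_A_multiple_notin_root_lattice[of "2 * k" 1]
    assms by simp

lemma lattices_A1:
  "root_lattice (A 1) \<inter> scale 2 (weight_lattice (A 1)) = scale 2 (weight_lattice (A 1)) \<and>
   scale 2 (weight_lattice (A 1)) \<noteq> scale 2 (root_lattice (A 1))"
proof (rule lattices_case_b)
  show "(\<lambda>j. 2 * fund_weight (A 1) k j) \<in> root_lattice (A 1)" if "k \<in> idx (A 1)" for k
    using that by (intro fund_weight_multiple_in_root_lattice[where c = "\<lambda>_. 1"])
      (auto simp: idx_classical root_comb_coeff_A)
  show "fund_weight (A 1) 1 \<notin> root_lattice (A 1)"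
    using fund_weight_A_multiple_notin_root_lattice[of 1 1] by simp
qed

lemma lattices_A_odd:
  assumes "k \<ge> 1"
  shows "root_lattice (A (2 * k + 1)) \<inter> scale 2 (weight_lattice (A (2 * k + 1))) = twoQ_plus_diamond (A (2 * k + 1)) \<and>
    twoQ_plus_diamond (A (2 * k + 1)) \<noteq> scale 2 (weight_lattice (A (2 * k + 1)))"
proof (rule lattices_case_d[OF mod2_cartan_kernel_A_odd alpha_diamond_A])
  have "\<not> int (2 * k + 2) dvd 2"
    using assms zdvd_imp_le[of "int (2 * k + 2)" 2] by auto
  then show "(\<lambda>j. 2 * fund_weight (A (2 * k + 1)) 1 j) \<notin> root_lattice (A (2 * k + 1))"
    using fund_weight_A_multiple_notin_root_lattice[of "2 * k + 1" 2] by simp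
qed simp

lemma lattices_B:
  assumes "n \<ge> 2"
  shows "root_lattice (B n) \<inter> scale 2 (weight_lattice (B n)) = scale 2 (weight_lattice (B n)) \<and>
    scale 2 (weight_lattice (B n)) \<noteq> scale 2 (root_lattice (B n))"
proof (rule lattices_case_b)
  show "(\<lambda>j. 2 * fund_weight (B n) k j) \<in> root_lattice (B n)" if "k \<in> idx (B n)" for k
    using that assms
    by (intro fund_weight_multiple_in_root_lattice[where c = "\<lambda>i. (if k = n then 1 else 2) * int (min i k)"])
      (auto simp: idx_classical root_comb_coeff_B min_def)
  have "2 dvd (\<Sum>j\<in>idx (B n). cartan (B n) i j * (if j = n then 1 else 0))" if i: "i \<in> idx (B n)" for i
  proof -
    have "(\<Sum>j\<in>idx (B n). cartan (B n) i j * (if j = n then 1 else 0)) =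
        root_comb_coeff (C n) (\<lambda>j. if j = n then 1 else 0) i"
      by (rule cartan_row_sum_eq_root_comb_coeff) (simp_all add: idx_classical cartan_C_eq_cartan_B_transpose)
    also have "\<dots> = (if i = n then 2 else if i + 1 = n then - 2 else 0)"
      using i assms by (auto simp: idx_classical root_comb_coeff_C)
    finally show ?thesis
      by simp
  qed
  then show "fund_weight (B n) n \<notin> root_lattice (B n)"
    using fund_weight_multiple_notin_root_lattice[of "B n" 2 "\<lambda>j. if j = n then 1 else 0" n 1] assms
    by (simp add: idx_classical)
qed

lemma lattices_C:
  assumes "n \<ge> 2"
  shows "root_lattice (C n) \<inter> scale 2 (weight_lattice (C n)) = scale 2 (weight_lattice (C n)) \<and>
    scale 2 (weight_lattice (C n)) \<noteq> scale 2 (root_lattice (C n))"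
proof (rule lattices_case_b)
  show "(\<lambda>j. 2 * fund_weight (C n) k j) \<in> root_lattice (C n)" if "k \<in> idx (C n)" for k
    using that assms
    by (intro fund_weight_multiple_in_root_lattice[where c = "\<lambda>i. if i < n then 2 * int (min i k) else int k"])
      (auto simp: idx_classical root_comb_coeff_C min_def)
  have "(\<Sum>j\<in>idx (C n). cartan (C n) i j * (if odd j then 1 else 0)) =
      root_comb_coeff (B n) (\<lambda>j. if odd j then 1 else 0) i" for i
    by (rule cartan_row_sum_eq_root_comb_coeff) (simp_all add: idx_classical cartan_C_eq_cartan_B_transpose)
  moreover have "even (root_comb_coeff (B n) (\<lambda>j. if odd j then 1 else 0) i)" if "i \<in> {1..n}" for i
    using that by (cases "odd i"; cases "i = 1") (auto simp: root_comb_coeff_B)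
  ultimately show "fund_weight (C n) 1 \<notin> root_lattice (C n)"
    using fund_weight_multiple_notin_root_lattice[of "C n" 2 "\<lambda>j. if odd j then 1 else 0" 1 1] assms
    by (auto simp: idx_classical)
qed

section \<open>Type D\<close>

lemma root_comb_coeff_simply_laced_column:
  assumes j: "j \<in> idx t" and N: "N \<subseteq> idx t" "j \<notin> N"
    and col: "\<And>i. i \<in> idx t \<Longrightarrow> cartan t i j = (if i = j then 2 else if i \<in> N then - 1 else 0)"
  shows "root_comb_coeff t c j = 2 * c j - sum c N"
proof -
  have "root_comb_coeff t c j = (\<Sum>i\<in>idx t. (if i = j then 2 * c j else 0) - (if i \<in> N then c i else 0))"
    unfolding root_comb_coeff_def by (rule sum.cong) (use N col in auto)
  also have "\<dots> = 2 * c j - sum c N"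
    using j N by (simp add: sum_subtractf sum.If_cases Int_absorb1 Int_absorb2)
  finally show ?thesis .
qed

text \<open>D_n is written D (m + 4) to avoid truncated subtraction: the branch node is m + 2 and the
  spin nodes are m + 3 and m + 4.\<close>

lemma root_comb_coeff_D:
  assumes "j \<in> idx (D (m + 4))"
  shows "root_comb_coeff (D (m + 4)) c j =
    (if j \<le> m + 1 then 2 * c j - (if 2 \<le> j then c (j - 1) else 0) - c (j + 1)
     else if j = m + 2 then 2 * c j - c (m + 1) - c (m + 3) - c (m + 4)
     else 2 * c j - c (m + 2))"
proof -
  consider "j \<le> m + 1" | "j = m + 2" | "j = m + 3" | "j = m + 4"
    using assms unfolding idx_classical by fastforce
  then show ?thesis
  proof cases
    case 1
    then show ?thesis
      using assms root_comb_coeff_chain_column[of "D (m + 4)" "m + 4" j 1 1 c]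
      by (auto simp: idx_classical cartan_def adjacent_def chain_edges_def)
  next
    case 2
    then show ?thesis
      using root_comb_coeff_simply_laced_column[of j "D (m + 4)" "{m + 1, m + 3, m + 4}" c]
      by (auto simp: idx_classical cartan_def adjacent_def chain_edges_def)
  qed (use root_comb_coeff_simply_laced_column[of j "D (m + 4)" "{m + 2}" c] in
      \<open>auto simp: idx_classical cartan_def adjacent_def chain_edges_def\<close>)
qed

lemma cartan_D_symmetric: "cartan (D n) i j = cartan (D n) j i"
  by (auto simp: cartan_def adjacent_def)

lemma twice_fund_weight_D_in_root_lattice:
  assumes "k \<in> {1..m + 2}"
  shows "(\<lambda>j. 2 * fund_weight (D (m + 4)) k j) \<in> root_lattice (D (m + 4))"
  using assms
  by (intro fund_weight_multiple_in_root_lattice[where c = "\<lambda>i. if i \<le> m + 2 then 2 * int (min i k) else int k"])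
    (auto simp: root_comb_coeff_D min_def idx_classical)

lemma spin_weight_D_multiple_in_root_lattice:
  assumes "2 * h = r * (int m + 4)" and "k \<in> {m + 3, m + 4}"
  shows "(\<lambda>j. (2 * r) * fund_weight (D (m + 4)) k j) \<in> root_lattice (D (m + 4))"
  using assms
  by (intro fund_weight_multiple_in_root_lattice[where c = "\<lambda>i. if i \<le> m + 2 then r * int i else if i = k then h else h - r"])
    (auto simp: root_comb_coeff_D idx_classical algebra_simps)

lemma spin_weight_D_notin_root_lattice: "fund_weight (D (m + 4)) (m + 4) \<notin> root_lattice (D (m + 4))"
proof -
  let ?g = "\<lambda>j. if j = m + 3 \<or> j = m + 4 then 1 else 0"
  have "2 dvd (\<Sum>j\<in>idx (D (m + 4)). cartan (D (m + 4)) i j * ?g j)" if "i \<in> idx (D (m + 4))" for i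
  proof -
    have "(\<Sum>j\<in>idx (D (m + 4)). cartan (D (m + 4)) i j * ?g j) = root_comb_coeff (D (m + 4)) ?g i"
      by (rule cartan_row_sum_eq_root_comb_coeff) (simp_all add: cartan_D_symmetric)
    then show ?thesis
      using that by (auto simp: root_comb_coeff_D)
  qed
  then show ?thesis
    using fund_weight_multiple_notin_root_lattice[of "D (m + 4)" 2 ?g "m + 4" 1] by (simp add: idx_classical)
qed

lemma twice_spin_weight_D_odd_notin_root_lattice:
  assumes "odd m"
  shows "(\<lambda>j. 2 * fund_weight (D (m + 4)) (m + 4) j) \<notin> root_lattice (D (m + 4))"
proof -
  let ?g = "\<lambda>j. if j \<le> m + 2 then 2 * int j else if j = m + 3 then 1 else - 1"
  obtain q where q: "m = 2 * q + 1"
    using assms oddE by blast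
  have "4 dvd (\<Sum>j\<in>idx (D (m + 4)). cartan (D (m + 4)) i j * ?g j)" if "i \<in> idx (D (m + 4))" for i
  proof -
    have "(\<Sum>j\<in>idx (D (m + 4)). cartan (D (m + 4)) i j * ?g j) = root_comb_coeff (D (m + 4)) ?g i"
      by (rule cartan_row_sum_eq_root_comb_coeff) (simp_all add: cartan_D_symmetric)
    also have "\<dots> = (if i \<le> m + 1 then 0 else if i = m + 2 then 2 * int m + 6
        else if i = m + 3 then - 2 * int m - 2 else - 2 * int m - 6)"
      using that by (auto simp: root_comb_coeff_D idx_classical)
    finally show ?thesis
      unfolding q by presburger
  qed
  then show ?thesis
    using fund_weight_multiple_notin_root_lattice[of "D (m + 4)" 4 ?g "m + 4" 2] by (simp add: idx_classical)
qed

lemma mod2_cartan_kernel_D_odd: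
  assumes "odd m"
  shows "mod2_cartan_kernel_spanned_by (D (m + 4)) (\<lambda>i. if i = m + 3 \<or> i = m + 4 then 1 else 0)"
  unfolding mod2_cartan_kernel_spanned_by_def
proof (intro conjI allI impI ballI)
  fix j assume "j \<in> idx (D (m + 4))"
  then show "even (root_comb_coeff (D (m + 4)) (\<lambda>i. if i = m + 3 \<or> i = m + 4 then 1 else 0) j)"
    by (auto simp: root_comb_coeff_D)
next
  fix c assume ev: "\<forall>j\<in>idx (D (m + 4)). even (root_comb_coeff (D (m + 4)) c j)"
  have ev': "even (root_comb_coeff (D (m + 4)) c j)" if "1 \<le> j" "j \<le> m + 4" for j
    using ev that by (simp add: idx_classical)
  have chain: "even (c i - (if odd i then c 1 else 0))" if "1 \<le> i" "i \<le> m + 2" for i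
  proof (rule parity_along_chain[of "m + 1"])
    fix j assume "1 \<le> j" "j \<le> m + 1"
    with ev'[of j] show "even (2 * c j - (if 2 \<le> j then c (j - 1) else 0) - c (j + 1))"
      by (simp add: root_comb_coeff_D idx_classical)
  qed (use that in auto)
  have "even (c (m + 2))"
    using ev'[of "m + 3"] by (simp add: root_comb_coeff_D idx_classical)
  moreover have "even (c (m + 2) - c 1)"
    using chain[of "m + 2"] assms by simp
  ultimately have "even (c 1)"
    by presburger
  then have small: "even (c i)" if "1 \<le> i" "i \<le> m + 2" for i
    using chain[OF that] by (auto split: if_splits)
  have "even (2 * c (m + 2) - c (m + 1) - c (m + 3) - c (m + 4))"
    using ev'[of "m + 2"] by (simp add: root_comb_coeff_D idx_classical)
  moreover have "even (c (m + 1))"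
    using small[of "m + 1"] by simp
  ultimately have "even (c (m + 3) - c (m + 4))"
    by presburger
  with small show "\<exists>k. \<forall>i\<in>idx (D (m + 4)). even (c i - k * (if i = m + 3 \<or> i = m + 4 then 1 else 0))"
    by (intro exI[of _ "c (m + 4)"]) (auto simp: idx_classical)
qed

lemma alpha_diamond_D:
  "alpha_diamond (D (m + 4)) = root_comb (D (m + 4)) (\<lambda>i. if i = m + 3 \<or> i = m + 4 then 1 else 0)"
proof
  fix j
  have "root_comb (D (m + 4)) (\<lambda>i. if i = m + 3 \<or> i = m + 4 then 1 else 0) j =
      (\<Sum>i\<in>{1..m + 4}. (if i = m + 3 then simple_root (D (m + 4)) (m + 3) j else 0)
        + (if i = m + 4 then simple_root (D (m + 4)) (m + 4) j else 0))"
    unfolding root_comb_def idx_classical by (rule sum.cong) auto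
  then show "alpha_diamond (D (m + 4)) j = root_comb (D (m + 4)) (\<lambda>i. if i = m + 3 \<or> i = m + 4 then 1 else 0) j"
    by (simp add: alpha_diamond_def sum.distrib add.commute)
qed

lemma lattices_D_even:
  assumes "even n" and "n \<ge> 4"
  shows "root_lattice (D n) \<inter> scale 2 (weight_lattice (D n)) = scale 2 (weight_lattice (D n)) \<and>
    scale 2 (weight_lattice (D n)) \<noteq> scale 2 (root_lattice (D n))"
proof -
  define m where "m = n - 4"
  have n: "n = m + 4" and "even m"
    using assms by (auto simp: m_def)
  then have h: "2 * (int m div 2 + 2) = 1 * (int m + 4)"
    by (auto elim!: evenE)
  have "(\<lambda>j. 2 * fund_weight (D n) k j) \<in> root_lattice (D n)" if "k \<in> idx (D n)" for k
  proof (cases "k \<le> m + 2")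
    case True
    then show ?thesis
      using that twice_fund_weight_D_in_root_lattice[of k m] by (simp add: n idx_classical)
  next
    case False
    with that have "k \<in> {m + 3, m + 4}"
      by (auto simp: n idx_classical)
    then show ?thesis
      using spin_weight_D_multiple_in_root_lattice[OF h, of k] by (simp add: n)
  qed
  then show ?thesis
    using lattices_case_b spin_weight_D_notin_root_lattice[of m] unfolding n by blast
qed

lemma lattices_D_odd:
  assumes "odd n" and "n \<ge> 4"
  shows "root_lattice (D n) \<inter> scale 2 (weight_lattice (D n)) = twoQ_plus_diamond (D n) \<and>
    twoQ_plus_diamond (D n) \<noteq> scale 2 (weight_lattice (D n))"
proof -
  define m where "m = n - 4"
  have n: "n = m + 4" and m: "odd m"
    using assms by (auto simp: m_def)
  show ?thesis
    unfolding n by (rule lattices_case_d[OF mod2_cartan_kernel_D_odd[OF m] alpha_diamond_D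
        twice_spin_weight_D_odd_notin_root_lattice[OF m]])
qed

lemma alpha_diamond_D_apply:
  "alpha_diamond (D (m + 4)) j = (if j = m + 2 then - 2 else if j = m + 3 \<or> j = m + 4 then 2 else 0)"
  unfolding alpha_diamond_D root_comb_apply by (auto simp: root_comb_coeff_D idx_classical)

lemma fund_weight_D_apply: "fund_weight (D n) i j = (if j = i \<and> 1 \<le> j \<and> j \<le> n then 1 else 0)"
  by (auto simp: fund_weight_def idx_classical)

lemma sum_fund_weight_D:
  "(\<Sum>i\<in>{1..m + 2}. 2 * c i * fund_weight (D (m + 4)) i j) = (if 1 \<le> j \<and> j \<le> m + 2 then 2 * c j else 0)"
proof -
  have "(\<Sum>i\<in>{1..m + 2}. 2 * c i * fund_weight (D (m + 4)) i j) = (\<Sum>i\<in>{1..m + 2}. if i = j then 2 * c j else 0)"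
    by (rule sum.cong) (auto simp: fund_weight_D_apply)
  then show ?thesis
    by simp
qed

definition D_diamond_span :: "nat \<Rightarrow> (nat \<Rightarrow> int) set" where
  "D_diamond_span n = {v. \<exists>a b m :: int. \<exists>c :: nat \<Rightarrow> int.
     v = (\<lambda>j. 4 * a * fund_weight (D n) (n - 1) j + 4 * b * fund_weight (D n) n j
       + m * alpha_diamond (D n) j + (\<Sum>i\<in>{1..n - 2}. 2 * c i * fund_weight (D n) i j))}"

lemma D_diamond_span_eq:
  "D_diamond_span (m + 4) = {v. \<exists>a b k :: int. \<exists>c :: nat \<Rightarrow> int.
     v = (\<lambda>j. 4 * a * fund_weight (D (m + 4)) (m + 3) j + 4 * b * fund_weight (D (m + 4)) (m + 4) j
       + k * alpha_diamond (D (m + 4)) j + (\<Sum>i\<in>{1..m + 2}. 2 * c i * fund_weight (D (m + 4)) i j))}"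
proof -
  have "m + 4 - 1 = m + 3" "m + 4 - 2 = m + 2"
    by simp_all
  then show ?thesis
    unfolding D_diamond_span_def by (simp only:)
qed

lemma twoQ_plus_diamond_D_subset_D_diamond_span:
  "twoQ_plus_diamond (D (m + 4)) \<subseteq> D_diamond_span (m + 4)"
proof
  fix v assume "v \<in> twoQ_plus_diamond (D (m + 4))"
  then obtain c k where v: "v = (\<lambda>j. 2 * root_comb (D (m + 4)) c j + k * alpha_diamond (D (m + 4)) j)"
    by (auto simp: twoQ_plus_diamond_def scale_def root_lattice_eq_range)
  define e where "e i = (if i \<le> m + 1 then root_comb_coeff (D (m + 4)) c i
    else root_comb_coeff (D (m + 4)) c (m + 2) - c (m + 2))" for i
  have "v = (\<lambda>j. 4 * c (m + 3) * fund_weight (D (m + 4)) (m + 3) j + 4 * c (m + 4) * fund_weight (D (m + 4)) (m + 4) j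
      + (k - c (m + 2)) * alpha_diamond (D (m + 4)) j + (\<Sum>i\<in>{1..m + 2}. 2 * e i * fund_weight (D (m + 4)) i j))"
    unfolding v sum_fund_weight_D
    by (auto simp: fun_eq_iff root_comb_apply root_comb_coeff_D alpha_diamond_D_apply fund_weight_D_apply
        e_def idx_classical algebra_simps) (metis Suc_leI antisym not_le)
  then show "v \<in> D_diamond_span (m + 4)"
    unfolding D_diamond_span_eq by blast
qed

lemma D_diamond_span_subset:
  "D_diamond_span (m + 4) \<subseteq> root_lattice (D (m + 4)) \<inter> scale 2 (weight_lattice (D (m + 4)))"
proof
  fix v assume "v \<in> D_diamond_span (m + 4)"
  then obtain a b k c where v: "v = (\<lambda>j. 4 * a * fund_weight (D (m + 4)) (m + 3) j
      + 4 * b * fund_weight (D (m + 4)) (m + 4) j + k * alpha_diamond (D (m + 4)) j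
      + (\<Sum>i\<in>{1..m + 2}. 2 * c i * fund_weight (D (m + 4)) i j))"
    unfolding D_diamond_span_eq by blast
  then have v': "v = (\<lambda>j. a * (4 * fund_weight (D (m + 4)) (m + 3) j)
      + b * (4 * fund_weight (D (m + 4)) (m + 4) j) + k * alpha_diamond (D (m + 4)) j
      + (\<Sum>i\<in>{1..m + 2}. c i * (2 * fund_weight (D (m + 4)) i j)))"
    by (simp add: algebra_simps)
  have "2 * (int m + 4) = 2 * (int m + 4)" ..
  from spin_weight_D_multiple_in_root_lattice[OF this]
  have "(\<lambda>j. a * (4 * fund_weight (D (m + 4)) (m + 3) j)) \<in> root_lattice (D (m + 4))"
    and "(\<lambda>j. b * (4 * fund_weight (D (m + 4)) (m + 4) j)) \<in> root_lattice (D (m + 4))"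
    by (simp_all add: root_lattice_scale)
  moreover have "(\<lambda>j. k * alpha_diamond (D (m + 4)) j) \<in> root_lattice (D (m + 4))"
    by (simp add: alpha_diamond_D root_lattice_scale)
  moreover have "(\<lambda>j. \<Sum>i\<in>{1..m + 2}. c i * (2 * fund_weight (D (m + 4)) i j)) \<in> root_lattice (D (m + 4))"
    by (intro root_lattice_sum root_lattice_scale twice_fund_weight_D_in_root_lattice) auto
  ultimately have "v \<in> root_lattice (D (m + 4))"
    unfolding v' by (intro root_lattice_add)
  moreover have "v \<in> scale 2 (weight_lattice (D (m + 4)))"
    unfolding mem_scale_2_weight_lattice_iff v sum_fund_weight_D
    by (auto simp: alpha_diamond_D_apply fund_weight_D_apply weight_lattice_def idx_classical)
  ultimately show "v \<in> root_lattice (D (m + 4)) \<inter> scale 2 (weight_lattice (D (m + 4)))" ..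
qed

lemma twoQ_plus_diamond_D_odd:
  assumes "odd n" and "n \<ge> 4"
  shows "twoQ_plus_diamond (D n) = D_diamond_span n"
proof -
  define m where "m = n - 4"
  have n: "n = m + 4"
    using assms by (simp add: m_def)
  show ?thesis
    using lattices_D_odd[OF assms] twoQ_plus_diamond_D_subset_D_diamond_span[of m] D_diamond_span_subset[of m]
    unfolding n by blast
qed

theorem proposition2p2:
  assumes "valid_type t"
  shows
   "(((\<exists>k\<ge>1. t = A (2 * k)) \<or> t = E6) \<longrightarrow>
       root_lattice t \<inter> scale 2 (weight_lattice t) = scale 2 (root_lattice t) \<and>
       scale 2 (root_lattice t) \<noteq> scale 2 (weight_lattice t))
  \<and> ((t = A 1 \<or> (\<exists>n. t = B n) \<or> (\<exists>n. t = C n) \<or> (\<exists>k. t = D (2 * k + 2)) \<or> t = E7) \<longrightarrow>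
       root_lattice t \<inter> scale 2 (weight_lattice t) = scale 2 (weight_lattice t) \<and>
       scale 2 (weight_lattice t) \<noteq> scale 2 (root_lattice t))
  \<and> ((t = E8 \<or> t = F4 \<or> t = G2) \<longrightarrow>
       root_lattice t \<inter> scale 2 (weight_lattice t) = scale 2 (weight_lattice t) \<and>
       scale 2 (weight_lattice t) = scale 2 (root_lattice t))
  \<and> ((\<exists>k\<ge>1. t = A (2 * k + 1) \<or> t = D (2 * k + 3)) \<longrightarrow>
       root_lattice t \<inter> scale 2 (weight_lattice t) = twoQ_plus_diamond t \<and>
       twoQ_plus_diamond t \<noteq> scale 2 (weight_lattice t))
  \<and> (\<forall>n. t = D n \<and> odd n \<longrightarrow>
       twoQ_plus_diamond t =
         {v. \<exists>a b m :: int. \<exists>c :: nat \<Rightarrow> int.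
               v = (\<lambda>j. 4 * a * fund_weight t (n - 1) j + 4 * b * fund_weight t n j
                        + m * alpha_diamond t j
                        + (\<Sum>i\<in>{1..n - 2}. 2 * c i * fund_weight t i j))})"
  using assms
  apply (intro conjI)
  subgoal
    by (intro impI; elim disjE exE conjE; hypsubst; rule lattices_A_even lattices_E6; simp)
  subgoal
    by (intro impI; elim disjE exE; hypsubst; rule lattices_A1 lattices_B lattices_C lattices_D_even lattices_E7; simp)
  subgoal
    by (intro impI) (rule lattices_E8_F4_G2)
  subgoal
    by (intro impI; elim exE conjE disjE; hypsubst; rule lattices_A_odd lattices_D_odd; simp)
  subgoal
    by (intro allI impI; elim conjE; hypsubst; subst twoQ_plus_diamond_D_odd; simp add: D_diamond_span_def)
  done

end
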